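(* For any nonempty set $X$, the free inverse monoid $\operatorname{FIM}(X)$, regarded as an $F$-inverse monoid, is not finitely presented: there are no finite set $Y$ and finite relation $R$ on $\mathbb{I}\mathfrak{m}_Y$ such that $\operatorname{FInv}\langle Y\mid R\rangle\cong\operatorname{FIM}(X)$ as $F$-inverse monoids.
   Context: $F$-inverse monoids are inverse monoids in which each $\sigma$-class has a greatest element $s^{\mathfrak m}$; they form a variety in signature $(\cdot,1,{}^{-1},{}^{\mathfrak m})$. $\operatorname{FIM}(X)$ is $F$-inverse, with $(w_{\operatorname{FIM}(X)})^{\mathfrak m}$ equal to the value of the freely reduced form of $w$. $\mathbb{I}\mathfrak{m}_Y$ is the set of terms $u_0v_1^{\mathfrak m}u_1\cdots v_n^{\mathfrak m}u_n$ with $u_i,v_i\in(Y\cup Y^{-1})^*$, and $\operatorname{FInv}\langle Y\mid R\rangle$ is the quotient of the free $F$-inverse monoid on $Y$ by the congruence generated by $R$. *)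

theory Defs
  imports Main
begin

text \<open>Terms in the signature (multiplication, 1, inverse, m) over generators.\<close>
datatype 'a ftm = G 'a | E | M "'a ftm" "'a ftm" | I "'a ftm" | Mx "'a ftm"

fun gens :: "'a ftm \<Rightarrow> 'a set" where
  "gens (G a) = {a}" | "gens E = {}" | "gens (M s t) = gens s \<union> gens t"
| "gens (I t) = gens t" | "gens (Mx t) = gens t"

fun mfree :: "'a ftm \<Rightarrow> bool" where
  "mfree (G a) = True" | "mfree E = True" | "mfree (M s t) = (mfree s \<and> mfree t)"
| "mfree (I t) = mfree t" | "mfree (Mx t) = False"

definition ftms :: "'a set \<Rightarrow> 'a ftm set" where
  "ftms Y = {t. gens t \<subseteq> Y}"

definition itms :: "'a set \<Rightarrow> 'a ftm set" where
  "itms X = {t. gens t \<subseteq> X \<and> mfree t}"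

definition inv_monoid_rel ::
  "'t set \<Rightarrow> ('t \<Rightarrow> 't \<Rightarrow> bool) \<Rightarrow> ('t \<Rightarrow> 't \<Rightarrow> 't) \<Rightarrow> 't \<Rightarrow> ('t \<Rightarrow> 't) \<Rightarrow> bool" where
  "inv_monoid_rel C eq mul one iv \<longleftrightarrow>
     (\<forall>x\<in>C. \<forall>y\<in>C. \<forall>z\<in>C. eq (mul (mul x y) z) (mul x (mul y z))) \<and>
     (\<forall>x\<in>C. eq (mul one x) x \<and> eq (mul x one) x) \<and>
     (\<forall>x\<in>C. eq (mul (mul x (iv x)) x) x \<and> eq (mul (mul (iv x) x) (iv x)) (iv x)) \<and>
     (\<forall>e\<in>C. \<forall>f\<in>C. eq (mul e e) e \<and> eq (mul f f) f \<longrightarrow> eq (mul e f) (mul f e))"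

definition sigma_rel :: "'t set \<Rightarrow> ('t \<Rightarrow> 't \<Rightarrow> bool) \<Rightarrow> ('t \<Rightarrow> 't \<Rightarrow> 't) \<Rightarrow> 't \<Rightarrow> 't \<Rightarrow> bool" where
  "sigma_rel C eq mul s t \<longleftrightarrow> (\<exists>e\<in>C. eq (mul e e) e \<and> eq (mul e s) (mul e t))"

definition leq_rel :: "('t \<Rightarrow> 't \<Rightarrow> bool) \<Rightarrow> ('t \<Rightarrow> 't \<Rightarrow> 't) \<Rightarrow> ('t \<Rightarrow> 't) \<Rightarrow> 't \<Rightarrow> 't \<Rightarrow> bool" where
  "leq_rel eq mul iv s t \<longleftrightarrow> eq s (mul (mul s (iv s)) t)"

definition finv_monoid_rel ::
  "'t set \<Rightarrow> ('t \<Rightarrow> 't \<Rightarrow> bool) \<Rightarrow> ('t \<Rightarrow> 't \<Rightarrow> 't) \<Rightarrow> 't \<Rightarrow> ('t \<Rightarrow> 't) \<Rightarrow> ('t \<Rightarrow> 't) \<Rightarrow> bool" where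
  "finv_monoid_rel C eq mul one iv mx \<longleftrightarrow> inv_monoid_rel C eq mul one iv \<and>
     (\<forall>s\<in>C. sigma_rel C eq mul (mx s) s \<and>
        (\<forall>t\<in>C. sigma_rel C eq mul t s \<longrightarrow> leq_rel eq mul iv t (mx s)))"

definition icong :: "'a ftm set \<Rightarrow> 'a ftm rel \<Rightarrow> bool" where
  "icong T \<theta> \<longleftrightarrow> equiv T \<theta> \<and>
     (\<forall>a b c d. (a,b) \<in> \<theta> \<longrightarrow> (c,d) \<in> \<theta> \<longrightarrow> (M a c, M b d) \<in> \<theta>) \<and>
     (\<forall>a b. (a,b) \<in> \<theta> \<longrightarrow> (I a, I b) \<in> \<theta>)"

definition fcong :: "'a ftm set \<Rightarrow> 'a ftm rel \<Rightarrow> bool" where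
  "fcong T \<theta> \<longleftrightarrow> icong T \<theta> \<and> (\<forall>a b. (a,b) \<in> \<theta> \<longrightarrow> (Mx a, Mx b) \<in> \<theta>)"

definition fim_cong :: "'a set \<Rightarrow> 'a ftm rel" where
  "fim_cong X = \<Inter>{\<theta>. icong (itms X) \<theta> \<and> inv_monoid_rel (itms X) (\<lambda>a b. (a,b) \<in> \<theta>) M E I}"

text \<open>Words over generators and their inverses (True = inverted letter).\<close>
type_synonym 'a word = "('a \<times> bool) list"

definition word_tm :: "'a word \<Rightarrow> 'a ftm" where
  "word_tm w = foldr (\<lambda>(a,b) t. M (if b then I (G a) else G a) t) w E"

fun tword :: "'a ftm \<Rightarrow> 'a word" where
  "tword (G a) = [(a, False)]" | "tword E = []" | "tword (M s t) = tword s @ tword t"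
| "tword (I t) = rev (map (\<lambda>(a,b). (a, \<not> b)) (tword t))" | "tword (Mx t) = tword t"

definition free_red :: "'a word \<Rightarrow> 'a word" where
  "free_red w = foldr (\<lambda>x acc. case acc of [] \<Rightarrow> [x]
      | y # ys \<Rightarrow> (if fst x = fst y \<and> snd x \<noteq> snd y then ys else x # acc)) w []"

definition fim_mx :: "'a ftm \<Rightarrow> 'a ftm" where
  "fim_mx t = word_tm (free_red (tword t))"

text \<open>Elements of Im_Y: u0 v1^m u1 ... vn^m un, encoded as (u0, [(v1,u1),...,(vn,un)]).\<close>
type_synonym 'a imterm = "'a word \<times> ('a word \<times> 'a word) list"

definition im_over :: "'a set \<Rightarrow> 'a imterm \<Rightarrow> bool" where
  "im_over Y p \<longleftrightarrow> fst ` set (fst p) \<subseteq> Y \<and>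
     (\<forall>(v,u) \<in> set (snd p). fst ` set v \<subseteq> Y \<and> fst ` set u \<subseteq> Y)"

definition im_tm :: "'a imterm \<Rightarrow> 'a ftm" where
  "im_tm p = M (word_tm (fst p))
     (foldr (\<lambda>(v,u) t. M (Mx (word_tm v)) (M (word_tm u) t)) (snd p) E)"

definition finv_cong :: "'a set \<Rightarrow> ('a imterm \<times> 'a imterm) set \<Rightarrow> 'a ftm rel" where
  "finv_cong Y R = \<Inter>{\<theta>. fcong (ftms Y) \<theta> \<and>
      finv_monoid_rel (ftms Y) (\<lambda>a b. (a,b) \<in> \<theta>) M E I Mx \<and>
      (\<forall>(p,q) \<in> R. (im_tm p, im_tm q) \<in> \<theta>)}"

text \<open>Isomorphism of F-inverse monoids FInv<Y|R> and FIM(X), via a representative map.\<close>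
definition finv_iso_fim :: "'b set \<Rightarrow> ('b imterm \<times> 'b imterm) set \<Rightarrow> 'a set \<Rightarrow> bool" where
  "finv_iso_fim Y R X \<longleftrightarrow> (\<exists>f :: 'b ftm \<Rightarrow> 'a ftm.
     (\<forall>s\<in>ftms Y. f s \<in> itms X) \<and>
     (\<forall>s\<in>ftms Y. \<forall>t\<in>ftms Y. (s,t) \<in> finv_cong Y R \<longleftrightarrow> (f s, f t) \<in> fim_cong X) \<and>
     (\<forall>u\<in>itms X. \<exists>s\<in>ftms Y. (f s, u) \<in> fim_cong X) \<and>
     (\<forall>s\<in>ftms Y. \<forall>t\<in>ftms Y. (f (M s t), M (f s) (f t)) \<in> fim_cong X) \<and>
     (f E, E) \<in> fim_cong X \<and>
     (\<forall>s\<in>ftms Y. (f (I s), I (f s)) \<in> fim_cong X) \<and>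
     (\<forall>s\<in>ftms Y. (f (Mx s), fim_mx (f s)) \<in> fim_cong X))"

end

theory Submission
  imports Defs
begin

text \<open>Suppose \<open>FIM(X)\<close>, with \<open>x \<in> X\<close>, had a finite \<open>F\<close>-inverse presentation. Replacing the Munn
  trees of \<open>FIM(X)\<close> by sets of vertices of the Cayley tree that are only required to contain
  geodesics of length below \<open>n\<close> gives \<open>F\<close>-inverse monoids \<open>M\<^sub>n\<close>, whose maximum operation agrees
  with that of \<open>FIM(X)\<close> on elements of length below \<open>n\<close>. Choosing \<open>n\<close> beyond all lengths
  occurring under \<open>m\<close> in the finitely many relators, evaluating the presentation in \<open>M\<^sub>n\<close>
  through the isomorphism respects the relators and hence the whole presented congruence. Now
  \<open>x\<^sup>n\<close> is \<open>\<sigma>\<close>-maximal in \<open>FIM(X)\<close>, so a preimage \<open>t\<^sup>n\<close> satisfies \<open>(t\<^sup>n)\<^sup>m = t\<^sup>n\<close> in the presented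
  monoid; but in \<open>M\<^sub>n\<close> the maximum of \<open>x\<^sup>n\<close> is carried by the two-point set \<open>{1, x\<^sup>n}\<close>, which is
  \<open>n\<close>-closed, while \<open>x\<^sup>n\<close> itself carries the whole path.\<close>

section \<open>Free reduction and the free group on reduced words\<close>

definition inverse_letters :: "'a \<times> bool \<Rightarrow> 'a \<times> bool \<Rightarrow> bool" where
  "inverse_letters x y \<longleftrightarrow> fst x = fst y \<and> snd x \<noteq> snd y"

definition letter_inv :: "'a \<times> bool \<Rightarrow> 'a \<times> bool" where
  "letter_inv x = (fst x, \<not> snd x)"

definition word_inv :: "'a word \<Rightarrow> 'a word" where
  "word_inv w = rev (map letter_inv w)"

definition reduce_step :: "'a \<times> bool \<Rightarrow> 'a word \<Rightarrow> 'a word" where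
  "reduce_step x w = (case w of [] \<Rightarrow> [x] | y # ys \<Rightarrow> (if inverse_letters x y then ys else x # w))"

fun reduced :: "'a word \<Rightarrow> bool" where
  "reduced [] = True"
| "reduced [x] = True"
| "reduced (x # y # ys) = (\<not> inverse_letters x y \<and> reduced (y # ys))"

lemma free_red_conv_foldr: "free_red w = foldr reduce_step w []"
  unfolding free_red_def reduce_step_def inverse_letters_def by simp

lemma free_red_Nil [simp]: "free_red [] = []"
  by (simp add: free_red_conv_foldr)

lemma free_red_Cons: "free_red (x # w) = reduce_step x (free_red w)"
  by (simp add: free_red_conv_foldr)

lemma reduced_reduce_step: "reduced w \<Longrightarrow> reduced (reduce_step x w)"
  by (cases w rule: reduced.cases) (auto simp: reduce_step_def)

lemma reduced_foldr_reduce_step: "reduced w \<Longrightarrow> reduced (foldr reduce_step u w)"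
  by (induction u) (auto intro: reduced_reduce_step)

lemma reduced_free_red [simp]: "reduced (free_red w)"
  by (simp add: free_red_conv_foldr reduced_foldr_reduce_step)

lemma free_red_reduced: "reduced w \<Longrightarrow> free_red w = w"
  by (induction w rule: reduced.induct) (auto simp: free_red_Cons reduce_step_def)

lemma free_red_singleton [simp]: "free_red [x] = [x]"
  by (simp add: free_red_reduced)

lemma reduced_replicate: "reduced (replicate k (a, b))"
proof (induction k)
  case (Suc k) then show ?case by (cases k) (auto simp: inverse_letters_def)
qed simp

lemma reduce_step_letter_inv: "reduced w \<Longrightarrow> reduce_step (letter_inv x) (reduce_step x w) = w"
  by (cases w rule: reduced.cases)
     (auto simp: reduce_step_def inverse_letters_def letter_inv_def prod_eq_iff)

lemma letter_inv_letter_inv [simp]: "letter_inv (letter_inv x) = x"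
  by (simp add: letter_inv_def)

lemma word_inv_Cons: "word_inv (x # u) = word_inv u @ [letter_inv x]"
  by (simp add: word_inv_def)

lemma word_inv_word_inv [simp]: "word_inv (word_inv u) = u"
  by (simp add: word_inv_def rev_map comp_def)

lemma foldr_reduce_step_word_inv_append: "reduced w \<Longrightarrow> foldr reduce_step (word_inv u @ u) w = w"
proof (induction u arbitrary: w)
  case (Cons x u)
  have "foldr reduce_step (word_inv (x # u) @ x # u) w
      = foldr reduce_step (word_inv u)
          (reduce_step (letter_inv x) (reduce_step x (foldr reduce_step u w)))"
    by (simp add: word_inv_Cons)
  also have "\<dots> = w"
    using Cons by (simp add: reduce_step_letter_inv reduced_foldr_reduce_step)
  finally show ?case .
qed (simp add: word_inv_def)

lemma reduce_step_foldr:
  assumes "reduced r" "reduced w"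
  shows "reduce_step x (foldr reduce_step r w) = foldr reduce_step (reduce_step x r) w"
proof (cases r)
  case (Cons y ys)
  show ?thesis
  proof (cases "inverse_letters x y")
    case True
    then have "y = letter_inv x"
      by (cases x; cases y) (auto simp: inverse_letters_def letter_inv_def)
    with True Cons show ?thesis
      using reduce_step_letter_inv[OF reduced_foldr_reduce_step[OF assms(2)], of "letter_inv x" ys]
      by (simp add: reduce_step_def)
  next
    case False with Cons show ?thesis by (simp add: reduce_step_def)
  qed
qed (simp add: reduce_step_def)

lemma foldr_reduce_step_free_red:
  "reduced w \<Longrightarrow> foldr reduce_step u w = foldr reduce_step (free_red u) w"
  by (induction u) (simp_all add: free_red_Cons reduce_step_foldr)

lemma free_red_append: "free_red (u @ v) = foldr reduce_step u (free_red v)"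
  by (simp add: free_red_conv_foldr)

lemma free_red_append_free_red_left: "free_red (free_red u @ v) = free_red (u @ v)"
  by (simp add: free_red_append foldr_reduce_step_free_red[symmetric])

lemma free_red_append_free_red_right: "free_red (u @ free_red v) = free_red (u @ v)"
  by (simp add: free_red_append free_red_reduced)

lemma free_red_word_inv_append [simp]: "free_red (word_inv u @ u) = []"
  by (simp add: free_red_conv_foldr foldr_reduce_step_word_inv_append del: foldr_append)

lemma free_red_append_word_inv [simp]: "free_red (u @ word_inv u) = []"
  using free_red_word_inv_append[of "word_inv u"] by simp

definition fg_mult :: "'a word \<Rightarrow> 'a word \<Rightarrow> 'a word" where
  "fg_mult g h = free_red (g @ h)"

definition fg_inv :: "'a word \<Rightarrow> 'a word" where
  "fg_inv g = free_red (word_inv g)"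

lemma fg_inv_Nil [simp]: "fg_inv [] = []"
  by (simp add: fg_inv_def word_inv_def)

lemma reduced_fg_mult [simp]: "reduced (fg_mult g h)"
  by (simp add: fg_mult_def)

lemma reduced_fg_inv [simp]: "reduced (fg_inv g)"
  by (simp add: fg_inv_def)

lemma fg_mult_free_red_left [simp]: "fg_mult (free_red g) h = fg_mult g h"
  by (simp add: fg_mult_def free_red_append_free_red_left)

lemma fg_mult_free_red_right [simp]: "fg_mult g (free_red h) = fg_mult g h"
  by (simp add: fg_mult_def free_red_append_free_red_right)

lemma fg_mult_assoc: "fg_mult (fg_mult g h) k = fg_mult g (fg_mult h k)"
  by (simp add: fg_mult_def free_red_append_free_red_left free_red_append_free_red_right)

lemma fg_mult_Nil_left: "fg_mult [] h = free_red h"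
  by (simp add: fg_mult_def)

lemma fg_mult_Nil_right: "fg_mult g [] = free_red g"
  by (simp add: fg_mult_def)

lemma fg_mult_Nil_left_reduced: "reduced h \<Longrightarrow> fg_mult [] h = h"
  by (simp add: fg_mult_Nil_left free_red_reduced)

lemma fg_mult_Nil_right_reduced: "reduced g \<Longrightarrow> fg_mult g [] = g"
  by (simp add: fg_mult_Nil_right free_red_reduced)

lemma fg_mult_inv_left [simp]: "fg_mult (fg_inv g) g = []"
  by (simp add: fg_mult_def fg_inv_def free_red_append_free_red_left)

lemma fg_mult_inv_right [simp]: "fg_mult g (fg_inv g) = []"
  by (simp add: fg_mult_def fg_inv_def free_red_append_free_red_right)

lemma fg_mult_inv_cancel_left [simp]: "fg_mult (fg_inv g) (fg_mult g h) = free_red h"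
  by (simp add: fg_mult_Nil_left flip: fg_mult_assoc)

lemma fg_inv_unique:
  assumes "reduced g" "fg_mult g h = []"
  shows "g = fg_inv h"
proof -
  have "g = fg_mult g (fg_mult h (fg_inv h))"
    using assms(1) by (simp add: fg_mult_Nil_right_reduced)
  also have "\<dots> = fg_mult (fg_mult g h) (fg_inv h)"
    by (simp only: fg_mult_assoc)
  also have "\<dots> = fg_inv h"
    by (simp add: assms(2) fg_mult_Nil_left_reduced)
  finally show ?thesis .
qed

lemma fg_inv_free_red: "fg_inv (free_red w) = free_red (word_inv w)"
proof (rule fg_inv_unique[symmetric])
  show "fg_mult (free_red (word_inv w)) (free_red w) = []"
    by (simp add: fg_mult_def free_red_append_free_red_left free_red_append_free_red_right)
qed simp

lemma fg_inv_fg_mult: "fg_inv (fg_mult g h) = fg_mult (fg_inv h) (fg_inv g)"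
  by (rule fg_inv_unique[symmetric]) (simp_all add: fg_mult_assoc)

lemma fg_mult_inv_translate: "fg_mult (fg_inv (fg_mult g s)) (fg_mult g t) = fg_mult (fg_inv s) t"
  by (simp add: fg_inv_fg_mult fg_mult_assoc)

lemma fg_mult_idem:
  assumes "reduced g" "fg_mult g g = g"
  shows "g = []"
proof -
  have "fg_mult (fg_inv g) (fg_mult g g) = fg_mult (fg_inv g) g"
    using assms(2) by simp
  then show ?thesis using assms(1) by (simp add: free_red_reduced)
qed

section \<open>Geodesically closed sets of reduced words\<close>

text \<open>A set of vertices of the Cayley tree of the free group is \<open>n\<close>-closed if it contains the
  geodesic between any two of its vertices at distance less than \<open>n\<close>; the geodesic from \<open>s\<close> to
  \<open>t\<close> consists of the translates by \<open>s\<close> of the prefixes of the reduced word \<open>s\<inverse> t\<close>.\<close>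
definition geodesic_closed :: "nat \<Rightarrow> 'a word set \<Rightarrow> bool" where
  "geodesic_closed n C \<longleftrightarrow> (\<forall>s\<in>C. \<forall>t\<in>C. length (fg_mult (fg_inv s) t) < n \<longrightarrow>
      (\<forall>k. fg_mult s (take k (fg_mult (fg_inv s) t)) \<in> C))"

definition geodesic_hull :: "nat \<Rightarrow> 'a word set \<Rightarrow> 'a word set" where
  "geodesic_hull n A = \<Inter>{C. geodesic_closed n C \<and> A \<subseteq> C}"

lemma geodesic_closed_geodesic_hull [simp]: "geodesic_closed n (geodesic_hull n A)"
  unfolding geodesic_hull_def geodesic_closed_def by blast

lemma geodesic_hull_upper: "A \<subseteq> geodesic_hull n A"
  unfolding geodesic_hull_def by auto

lemma geodesic_hull_least: "geodesic_closed n C \<Longrightarrow> A \<subseteq> C \<Longrightarrow> geodesic_hull n A \<subseteq> C"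
  unfolding geodesic_hull_def by auto

lemma geodesic_hull_eq: "geodesic_closed n A \<Longrightarrow> geodesic_hull n A = A"
  by (meson geodesic_hull_upper geodesic_hull_least order_refl subset_antisym)

lemma geodesic_hull_mono: "A \<subseteq> B \<Longrightarrow> geodesic_hull n A \<subseteq> geodesic_hull n B"
  by (meson geodesic_hull_upper geodesic_hull_least geodesic_closed_geodesic_hull order_trans)

lemma geodesic_hull_Un_hull_left:
  "geodesic_hull n (geodesic_hull n A \<union> B) = geodesic_hull n (A \<union> B)"
proof (rule subset_antisym)
  have "geodesic_hull n A \<subseteq> geodesic_hull n (A \<union> B)"
    by (rule geodesic_hull_mono) simp
  then show "geodesic_hull n (geodesic_hull n A \<union> B) \<subseteq> geodesic_hull n (A \<union> B)"
    using geodesic_hull_upper[of "A \<union> B" n] by (intro geodesic_hull_least) auto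
  show "geodesic_hull n (A \<union> B) \<subseteq> geodesic_hull n (geodesic_hull n A \<union> B)"
    using geodesic_hull_upper[of A n] by (intro geodesic_hull_mono) auto
qed

lemma geodesic_hull_Un_hull_right:
  "geodesic_hull n (A \<union> geodesic_hull n B) = geodesic_hull n (A \<union> B)"
  using geodesic_hull_Un_hull_left[of n B A] by (simp add: Un_commute)

lemma geodesic_hull_reduced: "A \<subseteq> Collect reduced \<Longrightarrow> geodesic_hull n A \<subseteq> Collect reduced"
  by (rule geodesic_hull_least) (auto simp: geodesic_closed_def)

lemma image_fg_mult_fg_mult: "fg_mult g ` fg_mult h ` A = fg_mult (fg_mult g h) ` A"
  by (auto simp: fg_mult_assoc image_image)

lemma image_fg_mult_Nil: "A \<subseteq> Collect reduced \<Longrightarrow> fg_mult [] ` A = A"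
  by (force simp: fg_mult_Nil_left_reduced)

lemma geodesic_closed_image_fg_mult: "geodesic_closed n C \<Longrightarrow> geodesic_closed n (fg_mult g ` C)"
  unfolding geodesic_closed_def by (auto simp: fg_mult_inv_translate fg_mult_assoc)

lemma image_fg_mult_geodesic_hull:
  assumes "A \<subseteq> Collect reduced"
  shows "fg_mult g ` geodesic_hull n A = geodesic_hull n (fg_mult g ` A)"
proof (rule subset_antisym)
  have "geodesic_hull n A \<subseteq> fg_mult (fg_inv g) ` geodesic_hull n (fg_mult g ` A)"
  proof (rule geodesic_hull_least)
    have "A = fg_mult (fg_inv g) ` fg_mult g ` A"
      using assms by (simp add: image_fg_mult_fg_mult image_fg_mult_Nil)
    then show "A \<subseteq> fg_mult (fg_inv g) ` geodesic_hull n (fg_mult g ` A)"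
      using geodesic_hull_upper by blast
  qed (simp add: geodesic_closed_image_fg_mult)
  then have "fg_mult g ` geodesic_hull n A
      \<subseteq> fg_mult g ` fg_mult (fg_inv g) ` geodesic_hull n (fg_mult g ` A)"
    by blast
  also have "\<dots> = geodesic_hull n (fg_mult g ` A)"
    by (simp add: image_fg_mult_fg_mult image_fg_mult_Nil geodesic_hull_reduced image_subset_iff)
  finally show "fg_mult g ` geodesic_hull n A \<subseteq> geodesic_hull n (fg_mult g ` A)" .
  show "geodesic_hull n (fg_mult g ` A) \<subseteq> fg_mult g ` geodesic_hull n A"
    by (intro geodesic_hull_least geodesic_closed_image_fg_mult geodesic_closed_geodesic_hull
        image_mono geodesic_hull_upper)
qed

section \<open>A family of finite-depth F-inverse monoids\<close>

text \<open>The monoid \<open>M\<^sub>n\<close>: pairs of an \<open>n\<close>-closed set of vertices and a vertex in it, multiplied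
  as in the Margolis--Meakin description of the free inverse monoid but with \<open>n\<close>-closure in
  place of the subtree spanned by the union.\<close>
type_synonym 'a munn = "'a word set \<times> 'a word"

definition munn_carrier :: "nat \<Rightarrow> 'a munn set" where
  "munn_carrier n =
     {x. fst x \<subseteq> Collect reduced \<and> geodesic_closed n (fst x) \<and> [] \<in> fst x \<and> snd x \<in> fst x}"

definition munn_one :: "'a munn" where
  "munn_one = ({[]}, [])"

definition munn_mult :: "nat \<Rightarrow> 'a munn \<Rightarrow> 'a munn \<Rightarrow> 'a munn" where
  "munn_mult n x y = (geodesic_hull n (fst x \<union> fg_mult (snd x) ` fst y), fg_mult (snd x) (snd y))"

definition munn_inv :: "'a munn \<Rightarrow> 'a munn" where
  "munn_inv x = (fg_mult (fg_inv (snd x)) ` fst x, fg_inv (snd x))"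

definition munn_max :: "nat \<Rightarrow> 'a munn \<Rightarrow> 'a munn" where
  "munn_max n x = (geodesic_hull n {[], snd x}, snd x)"

lemma munn_carrierD:
  assumes "x \<in> munn_carrier n"
  shows "fst x \<subseteq> Collect reduced" "geodesic_closed n (fst x)" "[] \<in> fst x" "snd x \<in> fst x"
    "reduced (snd x)"
  using assms by (auto simp: munn_carrier_def)

lemma munn_one_carrier: "munn_one \<in> munn_carrier n"
  by (simp add: munn_carrier_def munn_one_def geodesic_closed_def fg_mult_def)

lemma munn_mult_carrier:
  assumes "x \<in> munn_carrier n" "y \<in> munn_carrier n"
  shows "munn_mult n x y \<in> munn_carrier n"
proof -
  let ?A = "fst x \<union> fg_mult (snd x) ` fst y"
  have "?A \<subseteq> Collect reduced" using munn_carrierD(1)[OF assms(1)] by auto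
  moreover have "[] \<in> ?A" "fg_mult (snd x) (snd y) \<in> ?A"
    using munn_carrierD(3,4)[OF assms(1)] munn_carrierD(4)[OF assms(2)] by auto
  ultimately show ?thesis
    using geodesic_hull_upper[of ?A n] geodesic_hull_reduced[of ?A n]
    by (auto simp: munn_carrier_def munn_mult_def)
qed

lemma munn_inv_carrier:
  assumes "x \<in> munn_carrier n"
  shows "munn_inv x \<in> munn_carrier n"
proof -
  let ?g = "fg_inv (snd x)"
  have "?g \<in> fg_mult ?g ` fst x"
    by (rule image_eqI[of _ _ "[]"]) (simp_all add: fg_mult_Nil_right_reduced munn_carrierD(3)[OF assms])
  moreover have "[] \<in> fg_mult ?g ` fst x"
    by (rule image_eqI[of _ _ "snd x"]) (simp_all add: munn_carrierD(4)[OF assms])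
  ultimately show ?thesis
    using munn_carrierD(1,2)[OF assms]
    by (auto simp: munn_carrier_def munn_inv_def geodesic_closed_image_fg_mult)
qed

lemma munn_max_carrier:
  assumes "x \<in> munn_carrier n"
  shows "munn_max n x \<in> munn_carrier n"
  using geodesic_hull_upper[of "{[], snd x}" n] munn_carrierD(5)[OF assms]
  by (auto simp: munn_carrier_def munn_max_def intro!: geodesic_hull_reduced)

lemma munn_mult_assoc:
  assumes "y \<in> munn_carrier n"
  shows "munn_mult n (munn_mult n x y) z = munn_mult n x (munn_mult n y z)"
proof -
  have "fst y \<union> fg_mult (snd y) ` fst z \<subseteq> Collect reduced"
    using munn_carrierD(1)[OF assms] by auto
  then have "fg_mult (snd x) ` geodesic_hull n (fst y \<union> fg_mult (snd y) ` fst z)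
      = geodesic_hull n (fg_mult (snd x) ` fst y \<union> fg_mult (fg_mult (snd x) (snd y)) ` fst z)"
    by (simp add: image_fg_mult_geodesic_hull image_Un image_fg_mult_fg_mult)
  then show ?thesis
    by (simp add: munn_mult_def fg_mult_assoc geodesic_hull_Un_hull_left
        geodesic_hull_Un_hull_right Un_assoc)
qed

lemma munn_mult_idempotent_left:
  assumes "x \<in> munn_carrier n" "A \<subseteq> Collect reduced" "geodesic_closed n A" "fst x \<subseteq> A"
  shows "munn_mult n (A, []) x = (A, snd x)"
  using assms munn_carrierD[OF assms(1)]
  by (auto simp: munn_mult_def image_fg_mult_Nil fg_mult_Nil_left_reduced geodesic_hull_eq
      Un_absorb2)

lemma munn_mult_one_left: "x \<in> munn_carrier n \<Longrightarrow> munn_mult n munn_one x = x"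
  by (auto simp: munn_one_def munn_mult_def image_fg_mult_Nil fg_mult_Nil_left_reduced
      geodesic_hull_eq insert_absorb munn_carrier_def)

lemma munn_mult_one_right: "x \<in> munn_carrier n \<Longrightarrow> munn_mult n x munn_one = x"
  by (auto simp: munn_one_def munn_mult_def fg_mult_Nil_right_reduced geodesic_hull_eq
      insert_absorb munn_carrier_def)

lemma munn_mult_inv_right:
  assumes "x \<in> munn_carrier n"
  shows "munn_mult n x (munn_inv x) = (fst x, [])"
  using munn_carrierD[OF assms]
  by (simp add: munn_mult_def munn_inv_def image_fg_mult_fg_mult image_fg_mult_Nil geodesic_hull_eq)

lemma munn_mult_inv_left:
  assumes "x \<in> munn_carrier n"
  shows "munn_mult n (munn_inv x) x = (fst (munn_inv x), [])"
  using munn_carrierD[OF munn_inv_carrier[OF assms]]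
  by (simp add: munn_mult_def munn_inv_def geodesic_hull_eq)

lemma munn_mult_inv_mult:
  assumes "x \<in> munn_carrier n"
  shows "munn_mult n (munn_mult n x (munn_inv x)) x = x"
  using munn_mult_idempotent_left[OF assms] munn_carrierD[OF assms]
  by (simp add: munn_mult_inv_right[OF assms])

lemma munn_inv_mult_inv:
  assumes "x \<in> munn_carrier n"
  shows "munn_mult n (munn_mult n (munn_inv x) x) (munn_inv x) = munn_inv x"
  using munn_mult_idempotent_left[OF munn_inv_carrier[OF assms]]
    munn_carrierD[OF munn_inv_carrier[OF assms]]
  by (simp add: munn_mult_inv_left[OF assms])

lemma munn_idempotent_snd:
  assumes "x \<in> munn_carrier n" "munn_mult n x x = x"
  shows "snd x = []"
  using fg_mult_idem[OF munn_carrierD(5)[OF assms(1)]] assms(2)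
  by (metis munn_mult_def snd_conv)

lemma munn_idempotents_commute:
  assumes "x \<in> munn_carrier n" "y \<in> munn_carrier n"
    and "munn_mult n x x = x" "munn_mult n y y = y"
  shows "munn_mult n x y = munn_mult n y x"
  using munn_idempotent_snd[OF assms(1,3)] munn_idempotent_snd[OF assms(2,4)]
    munn_carrierD(1)[OF assms(1)] munn_carrierD(1)[OF assms(2)]
  by (simp add: munn_mult_def image_fg_mult_Nil Un_commute)

lemma munn_mult_max_greatest:
  assumes "x \<in> munn_carrier n" "y \<in> munn_carrier n" "snd y = snd x"
  shows "munn_mult n (fst y, []) (munn_max n x) = y"
proof -
  have "fst (munn_max n x) \<subseteq> fst y"
    unfolding munn_max_def fst_conv
    by (rule geodesic_hull_least) (use munn_carrierD[OF assms(2)] assms(3) in auto)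
  then show ?thesis
    using munn_mult_idempotent_left[OF munn_max_carrier[OF assms(1)]] munn_carrierD[OF assms(2)]
      assms(3)
    by (simp add: munn_max_def prod_eq_iff)
qed

fun munn_eval :: "nat \<Rightarrow> ('b \<Rightarrow> 'a munn) \<Rightarrow> 'b ftm \<Rightarrow> 'a munn" where
  "munn_eval n v (G a) = v a"
| "munn_eval n v E = munn_one"
| "munn_eval n v (M s t) = munn_mult n (munn_eval n v s) (munn_eval n v t)"
| "munn_eval n v (I t) = munn_inv (munn_eval n v t)"
| "munn_eval n v (Mx t) = munn_max n (munn_eval n v t)"

lemma munn_eval_carrier: "(\<And>a. v a \<in> munn_carrier n) \<Longrightarrow> munn_eval n v t \<in> munn_carrier n"
  by (induction t)
     (auto intro: munn_one_carrier munn_mult_carrier munn_inv_carrier munn_max_carrier)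

definition kernel_on :: "'t set \<Rightarrow> ('t \<Rightarrow> 'm) \<Rightarrow> 't rel" where
  "kernel_on T h = {(a, b). a \<in> T \<and> b \<in> T \<and> h a = h b}"

lemma icong_kernel_on_munn_eval:
  assumes "\<And>a b. a \<in> T \<Longrightarrow> b \<in> T \<Longrightarrow> M a b \<in> T" "\<And>a. a \<in> T \<Longrightarrow> I a \<in> T"
  shows "icong T (kernel_on T (munn_eval n v))"
  using assms
  unfolding icong_def kernel_on_def equiv_def refl_on_def sym_def trans_def by auto

lemma inv_monoid_rel_kernel_on_munn_eval:
  assumes "\<And>a. v a \<in> munn_carrier n"
    and "\<And>a b. a \<in> T \<Longrightarrow> b \<in> T \<Longrightarrow> M a b \<in> T" "\<And>a. a \<in> T \<Longrightarrow> I a \<in> T" "E \<in> T"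
  shows "inv_monoid_rel T (\<lambda>a b. (a, b) \<in> kernel_on T (munn_eval n v)) M E I"
proof -
  have "munn_eval n v t \<in> munn_carrier n" for t
    using assms(1) by (rule munn_eval_carrier)
  then show ?thesis
    using assms(2-4) unfolding inv_monoid_rel_def kernel_on_def
    by (auto simp: munn_mult_one_left munn_mult_one_right munn_mult_inv_mult munn_inv_mult_inv
        intro: munn_mult_assoc munn_idempotents_commute)
qed

lemma fcong_kernel_on_munn_eval:
  assumes "\<And>a b. a \<in> T \<Longrightarrow> b \<in> T \<Longrightarrow> M a b \<in> T" "\<And>a. a \<in> T \<Longrightarrow> I a \<in> T"
    and "\<And>a. a \<in> T \<Longrightarrow> Mx a \<in> T"
  shows "fcong T (kernel_on T (munn_eval n v))"
  using icong_kernel_on_munn_eval[OF assms(1,2)] assms(3)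
  unfolding fcong_def kernel_on_def by auto

text \<open>In \<open>M\<^sub>n\<close> the \<open>\<sigma>\<close>-class of \<open>(A, g)\<close> consists of the elements with second component \<open>g\<close>,
  and its greatest element is \<open>munn_max n (A, g)\<close>.\<close>
lemma finv_monoid_rel_kernel_on_munn_eval:
  assumes gens: "\<And>a. v a \<in> munn_carrier n"
    and closed: "\<And>a b. a \<in> T \<Longrightarrow> b \<in> T \<Longrightarrow> M a b \<in> T" "\<And>a. a \<in> T \<Longrightarrow> I a \<in> T"
      "\<And>a. a \<in> T \<Longrightarrow> Mx a \<in> T" "E \<in> T"
  shows "finv_monoid_rel T (\<lambda>a b. (a, b) \<in> kernel_on T (munn_eval n v)) M E I Mx"
proof -
  let ?h = "munn_eval n v" and ?eq = "\<lambda>a b. (a, b) \<in> kernel_on T (munn_eval n v)"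
  have car: "?h t \<in> munn_carrier n" for t
    using gens by (rule munn_eval_carrier)
  have idem_car: "(fst (?h t), []) \<in> munn_carrier n" for t
    using munn_carrierD[OF car[of t]] by (simp add: munn_carrier_def)
  have idem_left: "munn_mult n (fst (?h t), []) y = (fst (?h t), snd y)"
    if "y \<in> munn_carrier n" "fst y \<subseteq> fst (?h t)" for t y
    using munn_mult_idempotent_left[OF that(1) _ _ that(2)] munn_carrierD[OF car[of t]] by simp
  have max_greatest: "munn_mult n (fst (?h t), []) (munn_max n (?h s)) = ?h t"
    if "snd (?h t) = snd (?h s)" for s t
    using munn_mult_max_greatest[OF car car that] .
  have "sigma_rel T ?eq M (Mx s) s \<and> (\<forall>t\<in>T. sigma_rel T ?eq M t s \<longrightarrow> leq_rel ?eq M I t (Mx s))"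
    if s: "s \<in> T" for s
  proof
    have e: "?h (M s (I s)) = (fst (?h s), [])"
      using munn_mult_inv_right[OF car] by simp
    show "sigma_rel T ?eq M (Mx s) s"
      unfolding sigma_rel_def kernel_on_def
      using s closed e idem_left[OF idem_car, of s s] idem_left[OF car, of s s] max_greatest[of s s]
      by (intro bexI[of _ "M s (I s)"]) auto
    show "\<forall>t\<in>T. sigma_rel T ?eq M t s \<longrightarrow> leq_rel ?eq M I t (Mx s)"
    proof (intro ballI impI)
      fix t assume t: "t \<in> T" and "sigma_rel T ?eq M t s"
      then obtain e where e_idem: "munn_mult n (?h e) (?h e) = ?h e"
        and e_eq: "munn_mult n (?h e) (?h t) = munn_mult n (?h e) (?h s)"
        unfolding sigma_rel_def kernel_on_def by auto
      have "snd (?h e) = []"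
        using munn_idempotent_snd[OF car e_idem] .
      then have "snd (?h t) = snd (?h s)"
        using e_eq munn_carrierD(5)[OF car] by (simp add: munn_mult_def fg_mult_Nil_left_reduced)
      then have "?h (M (M t (I t)) (Mx s)) = ?h t"
        using munn_mult_inv_right[OF car] max_greatest by simp
      then show "leq_rel ?eq M I t (Mx s)"
        unfolding leq_rel_def kernel_on_def using s t closed by simp
    qed
  qed
  then show ?thesis
    unfolding finv_monoid_rel_def
    using inv_monoid_rel_kernel_on_munn_eval[of v n T, OF gens closed(1,2,4)] by blast
qed

lemma ftms_simps [simp]:
  "M a b \<in> ftms Y \<longleftrightarrow> a \<in> ftms Y \<and> b \<in> ftms Y" "I a \<in> ftms Y \<longleftrightarrow> a \<in> ftms Y"
  "Mx a \<in> ftms Y \<longleftrightarrow> a \<in> ftms Y" "E \<in> ftms Y"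
  by (auto simp: ftms_def)

lemma itms_simps [simp]:
  "M a b \<in> itms X \<longleftrightarrow> a \<in> itms X \<and> b \<in> itms X" "I a \<in> itms X \<longleftrightarrow> a \<in> itms X" "E \<in> itms X"
  by (auto simp: itms_def)

lemma fim_cong_subset_kernel_on:
  assumes "\<And>a. v a \<in> munn_carrier n"
  shows "fim_cong X \<subseteq> kernel_on (itms X) (munn_eval n v)"
  unfolding fim_cong_def
  using icong_kernel_on_munn_eval[of "itms X" n v]
    inv_monoid_rel_kernel_on_munn_eval[of v n "itms X", OF assms]
  by (intro Inter_lower) simp

lemma finv_cong_subset_kernel_on:
  assumes "\<And>a. v a \<in> munn_carrier n"
    and "\<forall>(p, q) \<in> R. im_tm p \<in> ftms Y \<and> im_tm q \<in> ftms Y \<and>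
           munn_eval n v (im_tm p) = munn_eval n v (im_tm q)"
  shows "finv_cong Y R \<subseteq> kernel_on (ftms Y) (munn_eval n v)"
  unfolding finv_cong_def
  using fcong_kernel_on_munn_eval[of "ftms Y" n v]
    finv_monoid_rel_kernel_on_munn_eval[of v n "ftms Y", OF assms(1)] assms(2)
  by (intro Inter_lower) (auto simp: kernel_on_def)

section \<open>The free inverse monoid inside \<open>M\<^sub>n\<close>\<close>

lemma fim_cong_sym: "(a, b) \<in> fim_cong X \<Longrightarrow> (b, a) \<in> fim_cong X"
  unfolding fim_cong_def icong_def equiv_def by (auto dest: symD)

lemma fim_cong_trans: "(a, b) \<in> fim_cong X \<Longrightarrow> (b, c) \<in> fim_cong X \<Longrightarrow> (a, c) \<in> fim_cong X"
  unfolding fim_cong_def icong_def equiv_def by (auto dest: transD)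

lemma fim_cong_M: "(a, b) \<in> fim_cong X \<Longrightarrow> (c, d) \<in> fim_cong X \<Longrightarrow> (M a c, M b d) \<in> fim_cong X"
  unfolding fim_cong_def icong_def by auto

definition munn_gen :: "nat \<Rightarrow> 'a \<Rightarrow> 'a munn" where
  "munn_gen n a = (geodesic_hull n {[], [(a, False)]}, [(a, False)])"

abbreviation fim_eval :: "nat \<Rightarrow> 'a ftm \<Rightarrow> 'a munn" where
  "fim_eval n \<equiv> munn_eval n (munn_gen n)"

lemma munn_gen_carrier: "munn_gen n a \<in> munn_carrier n"
  using geodesic_hull_upper[of "{[], [(a, False)]}" n]
    geodesic_hull_reduced[of "{[], [(a, False)]}" n]
  by (auto simp: munn_carrier_def munn_gen_def)

lemma fim_eval_carrier: "fim_eval n t \<in> munn_carrier n"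
  by (rule munn_eval_carrier) (rule munn_gen_carrier)

lemma tword_I: "tword (I t) = word_inv (tword t)"
  by (simp add: word_inv_def letter_inv_def case_prod_beta')

lemma snd_fim_eval: "snd (fim_eval n t) = free_red (tword t)"
  by (induction t)
     (simp_all add: munn_gen_def munn_one_def munn_mult_def munn_inv_def munn_max_def
       fg_mult_def free_red_append_free_red_left free_red_append_free_red_right fg_inv_free_red
       free_red_reduced tword_I del: tword.simps(4))

lemma fim_cong_imp_fim_eval_eq: "(u, v) \<in> fim_cong X \<Longrightarrow> fim_eval n u = fim_eval n v"
  using fim_cong_subset_kernel_on[of "munn_gen n" n X, OF munn_gen_carrier] by (auto simp: kernel_on_def)

lemma fim_cong_imp_free_red_eq: "(u, v) \<in> fim_cong X \<Longrightarrow> free_red (tword u) = free_red (tword v)"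
  using fim_cong_imp_fim_eval_eq[of u v X 0] by (metis snd_fim_eval)

lemma word_tm_Nil [simp]: "word_tm [] = E"
  by (simp add: word_tm_def)

lemma word_tm_Cons: "word_tm (x # w) = M (if snd x then I (G (fst x)) else G (fst x)) (word_tm w)"
  by (cases x) (simp add: word_tm_def)

lemma fim_eval_letter:
  "fim_eval n (if snd x then I (G (fst x)) else G (fst x)) = (geodesic_hull n {[], [x]}, [x])"
proof (cases x)
  case (Pair a b)
  show ?thesis
  proof (cases b)
    case True
    have inv: "fg_inv [(a, False)] = [(a, True)]"
      by (simp add: fg_inv_def word_inv_def letter_inv_def free_red_reduced)
    have "fg_mult [(a, True)] ` geodesic_hull n {[], [(a, False)]}
        = geodesic_hull n (fg_mult [(a, True)] ` {[], [(a, False)]})"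
      by (rule image_fg_mult_geodesic_hull) auto
    also have "fg_mult [(a, True)] ` {[], [(a, False)]} = {[(a, True)], []}"
      by (simp add: fg_mult_def free_red_Cons reduce_step_def inverse_letters_def)
    finally show ?thesis
      using Pair True by (simp add: munn_inv_def munn_gen_def inv insert_commute)
  qed (simp add: Pair munn_gen_def)
qed

definition reduced_prefixes :: "'a word \<Rightarrow> 'a word set" where
  "reduced_prefixes w = range (\<lambda>k. free_red (take k w))"

lemma reduced_prefixes_Cons:
  "reduced_prefixes (x # w) = insert [] (fg_mult [x] ` reduced_prefixes w)"
proof -
  have "free_red (take (Suc k) (x # w)) = fg_mult [x] (free_red (take k w))" for k
    using free_red_append_free_red_right[of "[x]" "take k w"] by (simp add: fg_mult_def)
  moreover have "free_red (take k (x # w)) \<in> insert [] (fg_mult [x] ` reduced_prefixes w)" for k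
    using calculation by (cases k) (auto simp: reduced_prefixes_def simp del: fg_mult_free_red_right)
  ultimately show ?thesis
    unfolding reduced_prefixes_def
    by (auto intro: range_eqI[of _ _ 0] range_eqI[of _ _ "Suc _"] simp del: fg_mult_free_red_right)
qed

lemma fim_eval_word_tm:
  "fim_eval n (word_tm w) = (geodesic_hull n (reduced_prefixes w), free_red w)"
proof (induction w)
  case Nil
  show ?case
    by (simp add: munn_one_def reduced_prefixes_def geodesic_hull_eq geodesic_closed_def
        fg_mult_def)
next
  case (Cons x w)
  have "[] \<in> reduced_prefixes w"
    by (auto simp: reduced_prefixes_def intro: range_eqI[of _ _ 0])
  moreover have "fg_mult [x] [] = [x]"
    by (simp add: fg_mult_def free_red_reduced)
  ultimately have "[x] \<in> fg_mult [x] ` reduced_prefixes w"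
    by force
  then have "{[], [x]} \<union> fg_mult [x] ` reduced_prefixes w = reduced_prefixes (x # w)"
    by (auto simp: reduced_prefixes_Cons)
  moreover have "reduced_prefixes w \<subseteq> Collect reduced"
    by (auto simp: reduced_prefixes_def)
  ultimately have "munn_mult n (geodesic_hull n {[], [x]}, [x]) (fim_eval n (word_tm w))
      = (geodesic_hull n (reduced_prefixes (x # w)), fg_mult [x] (free_red w))"
    by (simp add: Cons munn_mult_def image_fg_mult_geodesic_hull geodesic_hull_Un_hull_left
        geodesic_hull_Un_hull_right)
  moreover have "fg_mult [x] (free_red w) = free_red (x # w)"
    using free_red_append_free_red_right[of "[x]" w] by (simp add: fg_mult_def)
  ultimately show ?case
    by (simp add: word_tm_Cons fim_eval_letter del: munn_eval.simps(1,4))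
qed

lemma geodesic_hull_pair_eq_prefixes:
  assumes "reduced r" "length r < n"
  shows "geodesic_hull n {[], r} = geodesic_hull n (reduced_prefixes r)"
proof (rule subset_antisym)
  have "[] \<in> reduced_prefixes r" "r \<in> reduced_prefixes r"
    using range_eqI[of _ "\<lambda>k. free_red (take k r)" 0]
      range_eqI[of _ "\<lambda>k. free_red (take k r)" "length r"]
    by (auto simp: reduced_prefixes_def free_red_reduced assms(1))
  then show "geodesic_hull n {[], r} \<subseteq> geodesic_hull n (reduced_prefixes r)"
    by (intro geodesic_hull_mono) auto
  have "[] \<in> geodesic_hull n {[], r}" "r \<in> geodesic_hull n {[], r}"
    using geodesic_hull_upper by blast+
  moreover have "fg_mult (fg_inv []) r = r"
    using assms(1) by (simp add: fg_mult_Nil_left_reduced)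
  ultimately have "fg_mult [] (take k r) \<in> geodesic_hull n {[], r}" for k
    using geodesic_closed_geodesic_hull[of n "{[], r}"] assms(2)
    unfolding geodesic_closed_def by force
  then show "geodesic_hull n (reduced_prefixes r) \<subseteq> geodesic_hull n {[], r}"
    by (intro geodesic_hull_least) (auto simp: reduced_prefixes_def fg_mult_Nil_left)
qed

lemma munn_max_eq_fim_eval_word:
  assumes "x \<in> munn_carrier n" "length (snd x) < n"
  shows "munn_max n x = fim_eval n (word_tm (snd x))"
  using assms munn_carrierD(5)[OF assms(1)]
  by (simp add: munn_max_def fim_eval_word_tm geodesic_hull_pair_eq_prefixes free_red_reduced)

fun tm_pow :: "nat \<Rightarrow> 'a ftm \<Rightarrow> 'a ftm" where
  "tm_pow 0 t = E"
| "tm_pow (Suc k) t = M t (tm_pow k t)"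

lemma word_tm_replicate: "word_tm (replicate k (a, False)) = tm_pow k (G a)"
  by (induction k) (simp_all add: word_tm_Cons)

lemma tword_tm_pow: "tword (tm_pow k (G a)) = replicate k (a, False)"
  by (induction k) simp_all

lemma geodesic_closed_pair:
  assumes "reduced r" "n \<le> length r" "n \<le> length (fg_inv r)"
  shows "geodesic_closed n {[], r}"
  using assms
  by (auto simp: geodesic_closed_def fg_mult_Nil_left_reduced fg_mult_Nil_right_reduced)

text \<open>The power \<open>x\<^sup>n\<close> of a generator is \<open>\<sigma>\<close>-maximal in the free inverse monoid, but not in
  \<open>M\<^sub>n\<close>: its maximum forgets the interior vertices of the path, which \<open>n\<close>-closure does not
  restore.\<close>
lemma munn_max_fim_eval_power_ne:
  assumes "2 \<le> n"
  shows "munn_max n (fim_eval n (tm_pow n (G a))) \<noteq> fim_eval n (tm_pow n (G a))"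
proof
  define r where "r = replicate n (a, False)"
  have r: "reduced r"
    by (simp add: r_def reduced_replicate)
  assume "munn_max n (fim_eval n (tm_pow n (G a))) = fim_eval n (tm_pow n (G a))"
  then have "geodesic_hull n {[], r} = geodesic_hull n (reduced_prefixes r)"
    using r by (simp add: munn_max_def r_def word_tm_replicate[symmetric] fim_eval_word_tm
        free_red_reduced)
  moreover have "fg_inv r = replicate n (a, True)"
    by (simp add: r_def fg_inv_def word_inv_def letter_inv_def free_red_reduced reduced_replicate)
  then have "geodesic_hull n {[], r} = {[], r}"
    using r by (intro geodesic_hull_eq geodesic_closed_pair) (simp_all add: r_def)
  moreover have "[(a, False)] \<in> reduced_prefixes r"
    using assms range_eqI[of _ "\<lambda>k. free_red (take k r)" 1]
    by (cases n) (simp_all add: reduced_prefixes_def r_def)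
  ultimately have "[(a, False)] \<in> {[], r}"
    using geodesic_hull_upper by blast
  then show False
    using assms by (cases n) (auto simp: r_def Cons_replicate_eq)
qed

lemma word_tm_in_ftms: "word_tm w \<in> ftms Y \<longleftrightarrow> fst ` set w \<subseteq> Y"
proof -
  have "gens (word_tm w) = fst ` set w"
    by (induction w) (auto simp: word_tm_Cons)
  then show ?thesis by (simp add: ftms_def)
qed

lemma im_tm_ftms:
  assumes "im_over Y p"
  shows "im_tm p \<in> ftms Y"
proof -
  have "foldr (\<lambda>(v, u) t. M (Mx (word_tm v)) (M (word_tm u) t)) l E \<in> ftms Y"
    if "\<forall>(v, u) \<in> set l. fst ` set v \<subseteq> Y \<and> fst ` set u \<subseteq> Y" for l
    using that by (induction l) (auto simp: word_tm_in_ftms)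
  then show ?thesis
    using assms by (simp add: im_over_def im_tm_def word_tm_in_ftms)
qed

lemma tm_pow_ftms: "t \<in> ftms Y \<Longrightarrow> tm_pow k t \<in> ftms Y"
  by (induction k) auto

section \<open>No finite presentation\<close>

locale finv_fim_iso =
  fixes Y :: "'b set" and R :: "('b imterm \<times> 'b imterm) set" and X :: "'a set"
    and f :: "'b ftm \<Rightarrow> 'a ftm"
  assumes relators_over: "\<And>p q. (p, q) \<in> R \<Longrightarrow> im_over Y p \<and> im_over Y q"
    and cong_iff: "\<And>s t. s \<in> ftms Y \<Longrightarrow> t \<in> ftms Y \<Longrightarrow>
      (s, t) \<in> finv_cong Y R \<longleftrightarrow> (f s, f t) \<in> fim_cong X"
    and onto: "\<And>u. u \<in> itms X \<Longrightarrow> \<exists>s\<in>ftms Y. (f s, u) \<in> fim_cong X"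
    and hom_M: "\<And>s t. s \<in> ftms Y \<Longrightarrow> t \<in> ftms Y \<Longrightarrow> (f (M s t), M (f s) (f t)) \<in> fim_cong X"
    and hom_E: "(f E, E) \<in> fim_cong X"
    and hom_I: "\<And>s. s \<in> ftms Y \<Longrightarrow> (f (I s), I (f s)) \<in> fim_cong X"
    and hom_Mx: "\<And>s. s \<in> ftms Y \<Longrightarrow> (f (Mx s), fim_mx (f s)) \<in> fim_cong X"
begin

text \<open>The maximum of \<open>M\<^sub>n\<close> agrees with the \<open>m\<close>-operation of the free inverse monoid on
  elements of length below \<open>n\<close>, so pulling the evaluation back along \<open>f\<close> is faithful on every
  term \<open>s\<close> with \<open>mx_bound s \<le> n\<close>, i.e. whose \<open>m\<close>-subterms \<open>f\<close> maps to elements of length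
  below \<open>n\<close>.\<close>
fun mx_bound :: "'b ftm \<Rightarrow> nat" where
  "mx_bound (G y) = 0"
| "mx_bound E = 0"
| "mx_bound (M s t) = max (mx_bound s) (mx_bound t)"
| "mx_bound (I t) = mx_bound t"
| "mx_bound (Mx t) = max (mx_bound t) (Suc (length (free_red (tword (f t)))))"

abbreviation pull_eval :: "nat \<Rightarrow> 'b ftm \<Rightarrow> 'a munn" where
  "pull_eval n \<equiv> munn_eval n (\<lambda>y. fim_eval n (f (G y)))"

lemma pull_eval_eq_fim_eval:
  "s \<in> ftms Y \<Longrightarrow> mx_bound s \<le> n \<Longrightarrow> pull_eval n s = fim_eval n (f s)"
proof (induction s)
  case E
  then show ?case using fim_cong_imp_fim_eval_eq[OF hom_E] by simp
next
  case (M a b)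
  then show ?case using fim_cong_imp_fim_eval_eq[OF hom_M, of a b] by simp
next
  case (I a)
  then show ?case using fim_cong_imp_fim_eval_eq[OF hom_I, of a] by simp
next
  case (Mx a)
  then have IH: "pull_eval n a = fim_eval n (f a)"
    and short: "length (free_red (tword (f a))) < n"
    by auto
  have "pull_eval n (Mx a) = munn_max n (fim_eval n (f a))"
    using IH by simp
  also have "\<dots> = fim_eval n (fim_mx (f a))"
    using munn_max_eq_fim_eval_word[OF fim_eval_carrier] short
    by (simp add: snd_fim_eval fim_mx_def)
  also have "\<dots> = fim_eval n (f (Mx a))"
    using fim_cong_imp_fim_eval_eq[OF hom_Mx, of a] Mx.prems by simp
  finally show ?case .
qed simp

lemma pull_eval_finv_cong:
  assumes "\<And>p q. (p, q) \<in> R \<Longrightarrow> mx_bound (im_tm p) \<le> n \<and> mx_bound (im_tm q) \<le> n"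
    and "(s, t) \<in> finv_cong Y R"
  shows "pull_eval n s = pull_eval n t"
proof -
  have relator:
    "im_tm p \<in> ftms Y \<and> im_tm q \<in> ftms Y \<and> pull_eval n (im_tm p) = pull_eval n (im_tm q)"
    if pq: "(p, q) \<in> R" for p q
  proof -
    have P: "im_tm p \<in> ftms Y" and Q: "im_tm q \<in> ftms Y"
      using relators_over[OF pq] by (auto intro: im_tm_ftms)
    have "(im_tm p, im_tm q) \<in> finv_cong Y R"
      using pq unfolding finv_cong_def by blast
    then have "(f (im_tm p), f (im_tm q)) \<in> fim_cong X"
      using cong_iff[OF P Q] by simp
    then have "fim_eval n (f (im_tm p)) = fim_eval n (f (im_tm q))"
      by (rule fim_cong_imp_fim_eval_eq)
    then show ?thesis
      using P Q assms(1)[OF pq] by (simp add: pull_eval_eq_fim_eval)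
  qed
  have "finv_cong Y R \<subseteq> kernel_on (ftms Y) (pull_eval n)"
    by (rule finv_cong_subset_kernel_on) (use fim_eval_carrier relator in auto)
  then show ?thesis
    using assms(2) by (auto simp: kernel_on_def)
qed

lemma fim_cong_tm_pow:
  assumes "t \<in> ftms Y" "(f t, u) \<in> fim_cong X"
  shows "(f (tm_pow k t), tm_pow k u) \<in> fim_cong X"
proof (induction k)
  case (Suc k)
  show ?case
    using hom_M[OF assms(1) tm_pow_ftms[OF assms(1)]] fim_cong_M[OF assms(2) Suc] fim_cong_trans
    by fastforce
qed (simp add: hom_E)

lemma mx_bound_tm_pow: "mx_bound (tm_pow k t) \<le> mx_bound t"
  by (induction k) auto

lemma relators_bounded:
  assumes "finite R"
  obtains N where "\<And>p q. (p, q) \<in> R \<Longrightarrow> mx_bound (im_tm p) \<le> N \<and> mx_bound (im_tm q) \<le> N"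
proof -
  have "finite ((\<lambda>(p, q). max (mx_bound (im_tm p)) (mx_bound (im_tm q))) ` R)"
    using assms by simp
  then obtain N where "\<forall>k \<in> (\<lambda>(p, q). max (mx_bound (im_tm p)) (mx_bound (im_tm q))) ` R. k \<le> N"
    by (auto simp: finite_nat_set_iff_bounded_le)
  then show ?thesis
    using that by fastforce
qed

theorem finite_relators_imp_no_generators:
  assumes "finite R"
  shows "X = {}"
proof (rule ccontr)
  assume "X \<noteq> {}"
  then obtain x where "x \<in> X" by blast
  then obtain t where t: "t \<in> ftms Y" "(f t, G x) \<in> fim_cong X"
    using onto[of "G x"] by (auto simp: itms_def)
  obtain N where N: "\<And>p q. (p, q) \<in> R \<Longrightarrow> mx_bound (im_tm p) \<le> N \<and> mx_bound (im_tm q) \<le> N"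
    using relators_bounded[OF assms] by blast
  define n where "n = 2 + N + mx_bound t"
  define T where "T = tm_pow n t"
  have T: "T \<in> ftms Y" "mx_bound T \<le> n"
    using t(1) tm_pow_ftms[OF t(1)] mx_bound_tm_pow[of n t] by (simp_all add: T_def n_def)
  have fT: "(f T, tm_pow n (G x)) \<in> fim_cong X"
    unfolding T_def using fim_cong_tm_pow[OF t] .
  then have "fim_mx (f T) = tm_pow n (G x)"
    using fim_cong_imp_free_red_eq[OF fT]
    by (simp add: fim_mx_def tword_tm_pow free_red_reduced reduced_replicate word_tm_replicate)
  then have "(f (Mx T), tm_pow n (G x)) \<in> fim_cong X"
    using hom_Mx[OF T(1)] by simp
  then have "(f (Mx T), f T) \<in> fim_cong X"
    by (rule fim_cong_trans) (rule fim_cong_sym[OF fT])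
  then have "(Mx T, T) \<in> finv_cong Y R"
    using cong_iff T(1) by simp
  then have "pull_eval n (Mx T) = pull_eval n T"
    by (rule pull_eval_finv_cong[rotated]) (use N in \<open>fastforce simp: n_def\<close>)
  moreover have "pull_eval n T = fim_eval n (tm_pow n (G x))"
    using pull_eval_eq_fim_eval[OF T] fim_cong_imp_fim_eval_eq[OF fT] by simp
  ultimately show False
    using munn_max_fim_eval_power_ne[of n x] by (simp add: n_def)
qed

end

theorem mainTheorem13:
  fixes X :: "'a set"
  assumes "X \<noteq> {}"
  shows "\<not> (\<exists>(Y :: 'b set) (R :: ('b imterm \<times> 'b imterm) set).
            finite Y \<and> finite R \<and> (\<forall>(p,q) \<in> R. im_over Y p \<and> im_over Y q) \<and>
            finv_iso_fim Y R X)"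
proof
  assume "\<exists>(Y :: 'b set) (R :: ('b imterm \<times> 'b imterm) set).
            finite Y \<and> finite R \<and> (\<forall>(p,q) \<in> R. im_over Y p \<and> im_over Y q) \<and>
            finv_iso_fim Y R X"
  then obtain Y :: "'b set" and R :: "('b imterm \<times> 'b imterm) set"
    where "finite R" and over: "\<forall>(p,q) \<in> R. im_over Y p \<and> im_over Y q"
      and "finv_iso_fim Y R X"
    by blast
  then obtain f :: "'b ftm \<Rightarrow> 'a ftm" where
    "\<forall>s\<in>ftms Y. \<forall>t\<in>ftms Y. (s, t) \<in> finv_cong Y R \<longleftrightarrow> (f s, f t) \<in> fim_cong X"
    "\<forall>u\<in>itms X. \<exists>s\<in>ftms Y. (f s, u) \<in> fim_cong X"
    "\<forall>s\<in>ftms Y. \<forall>t\<in>ftms Y. (f (M s t), M (f s) (f t)) \<in> fim_cong X"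
    "(f E, E) \<in> fim_cong X"
    "\<forall>s\<in>ftms Y. (f (I s), I (f s)) \<in> fim_cong X"
    "\<forall>s\<in>ftms Y. (f (Mx s), fim_mx (f s)) \<in> fim_cong X"
    unfolding finv_iso_fim_def by blast
  with over have "finv_fim_iso Y R X f"
    by unfold_locales auto
  with \<open>finite R\<close> have "X = {}"
    by (rule finv_fim_iso.finite_relators_imp_no_generators[rotated])
  with assms show False ..
qed

end
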